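(* Fix an integer $k\ge3$. Let $\beta\in\mathbb C$ satisfy $\beta^{k+1}=\big(1-(\tfrac12)^{1/k}e^{\pi i/k}\big)^{-1}$, let $\alpha=-\beta^{-k}$, and let $p(z)=\frac{(z-\alpha)(z+\beta)^k-1}{z}$ (a polynomial of degree $k$). Then there is $N\in\mathbb N$ such that for every integer $n>N$ and every solution $w\in\mathbb D$ of the equation $$z^2p'(z)=\frac{n+2}{n+1},$$ setting $\lambda=\frac1w+p(w)$, the polynomial $1+z[p(z)-\lambda]$ has at least two zeros (counted with multiplicity) in the open unit disk $\mathbb D$.
   Context: $\mathbb D$ denotes the open unit disk in $\mathbb C$. *)

theory Defs
  imports "HOL-Analysis.Analysis" "HOL-Computational_Algebra.Polynomial"
begin

text \<open>The polynomial p(z) = ((z - alpha)(z + beta)^k - 1)/z, realised as exact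
  polynomial division by the monomial z (the numerator has zero constant term
  when alpha = -beta^(-k)).\<close>
definition paper_p :: "complex \<Rightarrow> complex \<Rightarrow> nat \<Rightarrow> complex poly" where
  "paper_p \<alpha> \<beta> k = ([:-\<alpha>, 1:] * [:\<beta>, 1:] ^ k - 1) div [:0, 1:]"

definition zeros_in_disk :: "complex poly \<Rightarrow> nat" where
  "zeros_in_disk q = (\<Sum>a\<in>{a. poly q a = 0 \<and> norm a < 1}. order a q)"

end

theory Submission
  imports Defs "HOL-Computational_Algebra.Fundamental_Theorem_Algebra"
begin

text \<open>Put f(z) = 1/z + p(z). The zeros of 1 + z (p(z) - \<lambda>) with \<lambda> = f(w) are the solutions
  of f(z) = f(w); w is one of them, and it is almost double: f'(w) = \<epsilon>/w^2 with \<epsilon> = 1/(n+1).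
  Since z p(z) = (z - \<alpha>)(z + \<beta>)^k - 1, the equation for w reads
  (w + \<beta>)^(k-1) (k w^2 - (k-1) \<alpha> w + \<alpha> \<beta>) = \<epsilon>. As |\<beta>| > 1, the first factor is bounded
  below on the disk, so the quadratic is O(\<epsilon>); because (k-1)|\<alpha>| + |\<alpha> \<beta>| < k, this traps w in
  a fixed annulus r < |w| < R < 1. Dividing the level polynomial by z - w leaves a monic
  polynomial of degree k whose value at w is \<epsilon>/w, hence it has a root within (\<epsilon>/r)^(1/k) < 1 - R
  of w: a second zero in the disk.\<close>

lemma ex_power_le_prod:
  fixes f :: "nat \<Rightarrow> real"
  assumes "m > 0" and "\<And>i. i < m \<Longrightarrow> f i \<ge> 0"
  obtains i where "i < m" and "f i ^ m \<le> (\<Prod>j<m. f j)"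
proof -
  have "Min (f ` {..<m}) \<in> f ` {..<m}"
    using assms(1) by (intro Min_in) auto
  then obtain i where i: "i < m" "f i = Min (f ` {..<m})"
    by auto
  have "f i \<le> f j" if "j < m" for j
    using i(2) that by simp
  then have "(\<Prod>j<m. f i) \<le> (\<Prod>j<m. f j)"
    using i(1) assms(2) by (intro prod_mono) auto
  then have "f i ^ m \<le> (\<Prod>j<m. f j)"
    by simp
  with i(1) show thesis
    by (rule that)
qed

lemma monic_poly_ex_root_near:
  fixes s :: "complex poly"
  assumes "lead_coeff s = 1" and "degree s > 0"
  obtains a where "poly s a = 0" and "norm (w - a) ^ degree s \<le> norm (poly s w)"
proof -
  define k where "k = degree s"
  obtain root where "smult (lead_coeff s) (\<Prod>i<k. [:-root i, 1:]) = s"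
    using complex_poly_decompose' unfolding k_def by blast
  then have s: "s = (\<Prod>i<k. [:-root i, 1:])"
    using assms(1) by simp
  obtain i where "i < k" and i: "norm (w - root i) ^ k \<le> (\<Prod>j<k. norm (w - root j))"
    using ex_power_le_prod[of k "\<lambda>j. norm (w - root j)"] assms(2) k_def by auto
  then have "poly s (root i) = 0"
    by (auto simp: s poly_prod)
  moreover have "norm (poly s w) = (\<Prod>j<k. norm (w - root j))"
    by (simp add: s poly_prod prod_norm)
  ultimately show thesis
    using that i k_def by metis
qed

lemma norm_quadratic_ge_leading_term:
  fixes a b c z :: complex
  assumes "norm z \<le> 1"
  shows "norm a * norm z ^ 2 - norm b - norm c \<le> norm (a * z^2 + b * z + c)"
proof -
  have "norm (b * z) \<le> norm b"
    using assms by (simp add: norm_mult mult_left_le)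
  moreover have "norm (a * z^2) - norm (b * z) - norm c \<le> norm (a * z^2 + b * z + c)"
    using norm_triangle_ineq4[of "a * z^2 + b * z + c" "b * z + c"] norm_triangle_ineq[of "b * z" c]
    by simp
  ultimately show ?thesis
    by (simp add: norm_mult norm_power)
qed

lemma norm_quadratic_ge_const_term:
  fixes a b c z :: complex
  assumes "norm z \<le> 1"
  shows "norm c - (norm a + norm b) * norm z \<le> norm (a * z^2 + b * z + c)"
proof -
  have "norm z ^ 2 \<le> norm z"
    using assms by (simp add: power2_eq_square mult_left_le_one_le)
  then have "norm (a * z^2) \<le> norm a * norm z"
    by (simp add: norm_mult norm_power mult_left_mono)
  then have "norm (a * z^2 + b * z) \<le> (norm a + norm b) * norm z"
    using norm_triangle_ineq[of "a * z^2" "b * z"] by (simp add: norm_mult distrib_right)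
  moreover have "norm c \<le> norm (a * z^2 + b * z + c) + norm (a * z^2 + b * z)"
    using norm_triangle_ineq4[of "a * z^2 + b * z + c" "a * z^2 + b * z"] by simp
  ultimately show ?thesis
    by linarith
qed

lemma quadratic_small_imp_annulus:
  fixes a b c :: complex
  assumes coeffs: "norm b + norm c < norm a" and "c \<noteq> 0"
  obtains r R \<eta> where "0 < r" and "R < 1" and "0 < \<eta>"
    and "\<And>z. norm z < 1 \<Longrightarrow> norm (a * z^2 + b * z + c) < \<eta> \<Longrightarrow> r < norm z \<and> norm z < R"
proof -
  define R where "R = sqrt ((norm a + norm b + norm c) / (2 * norm a))"
  define S where "S = norm a + norm b"
  define r where "r = min 1 (norm c / (2 * S))"
  define \<eta> where "\<eta> = min (norm a - norm b - norm c) (norm c) / 2"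
  have a: "norm a > 0"
    using coeffs norm_ge_zero[of b] norm_ge_zero[of c] by linarith
  have S: "S > 0"
    using a by (simp add: S_def add_pos_nonneg)
  have R2: "2 * (norm a * R^2) = norm a + norm b + norm c"
    unfolding R_def using a by (simp add: real_sqrt_pow2)
  have "norm a * R^2 < norm a * 1"
    using coeffs R2 by linarith
  then have "R^2 < 1^2"
    using a by simp
  then have "R < 1"
    by (rule power_less_imp_less_base) simp
  have outer: "norm a - norm b - norm c \<le> 2 * norm (a * z^2 + b * z + c)"
    if "R \<le> norm z" "norm z < 1" for z
  proof -
    have "norm a * R^2 \<le> norm a * norm z ^ 2"
      using that a by (intro mult_left_mono power_mono) (auto simp: R_def)
    with R2 norm_quadratic_ge_leading_term[where a = a and b = b and c = c and z = z] that(2)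
    show ?thesis
      by linarith
  qed
  have inner: "norm c \<le> 2 * norm (a * z^2 + b * z + c)" if "norm z \<le> r" for z
  proof -
    have "S * norm z \<le> S * (norm c / (2 * S))"
      using that S by (intro mult_left_mono) (auto simp: r_def)
    also have "\<dots> = norm c / 2"
      using S by simp
    finally have "S * norm z \<le> norm c / 2" .
    moreover have "norm c - S * norm z \<le> norm (a * z^2 + b * z + c)"
      using norm_quadratic_ge_const_term[where a = a and b = b and c = c and z = z] that
      by (simp add: S_def r_def)
    ultimately show ?thesis
      by linarith
  qed
  show thesis
  proof (rule that)
    show "0 < r" and "0 < \<eta>"
      using S coeffs assms(2) by (auto simp: r_def \<eta>_def)
    fix z
    assume "norm z < 1" and "norm (a * z^2 + b * z + c) < \<eta>"
    then have "\<not> R \<le> norm z" and "\<not> norm z \<le> r"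
      using outer[of z] inner[of z] by (auto simp: \<eta>_def)
    then show "r < norm z \<and> norm z < R"
      by simp
  qed fact
qed

definition level_poly :: "'a::field poly \<Rightarrow> 'a \<Rightarrow> 'a poly" where
  "level_poly P w = 1 + [:0, 1:] * (P - [:1 / w + poly P w:])"

lemma level_poly_degree:
  fixes P :: "'a::field poly"
  assumes "degree P > 0"
  shows "degree (level_poly P w) = degree P + 1"
    and "lead_coeff (level_poly P w) = lead_coeff P"
proof -
  define c where "c = 1 / w + poly P w"
  have Q: "level_poly P w = pCons 1 (P - [:c:])"
    by (simp add: level_poly_def c_def one_pCons)
  have "degree (P + - [:c:]) = degree P"
    by (rule degree_add_eq_left) (simp add: assms)
  then have deg: "degree (P - [:c:]) = degree P"
    by (simp only: diff_conv_add_uminus)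
  then have "P - [:c:] \<noteq> 0"
    using assms by auto
  moreover have "coeff (P - [:c:]) (degree P) = lead_coeff P"
    using assms by (simp add: coeff_pCons split: nat.split)
  ultimately show "degree (level_poly P w) = degree P + 1"
    and "lead_coeff (level_poly P w) = lead_coeff P"
    using deg by (simp_all add: Q)
qed

lemma level_poly_root:
  fixes P :: "'a::field poly"
  assumes "w \<noteq> 0"
  shows "poly (level_poly P w) w = 0"
    and "poly (pderiv (level_poly P w)) w = (w^2 * poly (pderiv P) w - 1) / w"
  using assms by (simp_all add: level_poly_def pderiv_add pderiv_mult pderiv_diff pderiv_pCons
      field_simps power2_eq_square)

lemma zeros_in_disk_ge_2:
  assumes "q \<noteq> 0" and "poly q a = 0" and "poly q b = 0" and "a \<noteq> b"
    and "norm a < 1" and "norm b < 1"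
  shows "zeros_in_disk q \<ge> 2"
proof -
  define S where "S = {x. poly q x = 0 \<and> norm x < 1}"
  have "finite S"
    unfolding S_def using poly_roots_finite[OF assms(1)] by simp
  moreover have "{a, b} \<subseteq> S"
    using assms by (auto simp: S_def)
  ultimately have "order a q + order b q \<le> (\<Sum>x\<in>S. order x q)"
    using sum_mono2[of S "{a, b}" "\<lambda>x. order x q"] assms(4) by simp
  moreover have "order a q > 0" and "order b q > 0"
    using assms(1-3) by (simp_all add: order_root)
  ultimately show ?thesis
    by (simp add: zeros_in_disk_def S_def)
qed

lemma level_poly_factor:
  fixes P :: "'a::field poly"
  assumes "lead_coeff P = 1" and "degree P > 0" and "w \<noteq> 0"
  obtains s where "level_poly P w = [:-w, 1:] * s" and "lead_coeff s = 1" and "degree s = degree P"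
    and "poly s w = (w^2 * poly (pderiv P) w - 1) / w"
proof -
  define Q where "Q = level_poly P w"
  have degQ: "degree Q = degree P + 1" and lcQ: "lead_coeff Q = 1"
    using level_poly_degree[OF assms(2)] assms(1) by (simp_all add: Q_def)
  have Qw: "poly Q w = 0" and Q'w: "poly (pderiv Q) w = (w^2 * poly (pderiv P) w - 1) / w"
    using level_poly_root[OF assms(3)] by (simp_all add: Q_def)
  obtain s where Qs: "Q = [:-w, 1:] * s"
    using Qw by (metis dvdE poly_eq_0_iff_dvd)
  have "s \<noteq> 0"
    using lcQ Qs by auto
  then have "degree Q = degree [:-w, 1:] + degree s"
    unfolding Qs by (intro degree_mult_eq) auto
  then have degs: "degree s = degree P"
    using degQ by simp
  have "lead_coeff Q = lead_coeff [:-w, 1:] * lead_coeff s"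
    unfolding Qs by (rule lead_coeff_mult)
  then have lcs: "lead_coeff s = 1"
    using lcQ by simp
  have "pderiv Q = [:-w, 1:] * pderiv s + s * pderiv [:-w, 1:]"
    unfolding Qs by (rule pderiv_mult)
  then have "poly s w = (w^2 * poly (pderiv P) w - 1) / w"
    using Q'w by (simp add: pderiv_pCons)
  with Qs[unfolded Q_def] lcs degs show thesis
    by (rule that)
qed

lemma zeros_in_disk_level_poly_ge_2:
  fixes P :: "complex poly"
  assumes monic: "lead_coeff P = 1" and deg: "degree P > 0"
    and "w \<noteq> 0" and "norm w \<le> R" and "R < 1"
    and crit: "w^2 * poly (pderiv P) w \<noteq> 1"
    and small: "norm (w^2 * poly (pderiv P) w - 1) < norm w * (1 - R) ^ degree P"
  shows "zeros_in_disk (level_poly P w) \<ge> 2"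
proof -
  obtain s where Qs: "level_poly P w = [:-w, 1:] * s" and lcs: "lead_coeff s = 1"
    and degs: "degree s = degree P" and sw: "poly s w = (w^2 * poly (pderiv P) w - 1) / w"
    using level_poly_factor[OF monic deg \<open>w \<noteq> 0\<close>] by blast
  obtain a where sa: "poly s a = 0" and a: "norm (w - a) ^ degree P \<le> norm (poly s w)"
    using monic_poly_ex_root_near[of s w] lcs degs deg by auto
  have "poly s w \<noteq> 0"
    using sw crit \<open>w \<noteq> 0\<close> by simp
  with sa have "a \<noteq> w"
    by auto
  have "norm (poly s w) < (1 - R) ^ degree P"
    using small \<open>w \<noteq> 0\<close> by (simp add: sw norm_divide pos_divide_less_eq mult.commute)
  with a have "norm (w - a) ^ degree P < (1 - R) ^ degree P"
    by linarith
  then have "norm (w - a) < 1 - R"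
    by (rule power_less_imp_less_base) (use \<open>R < 1\<close> in simp)
  then have "norm a < 1"
    using norm_triangle_ineq4[of w "w - a"] \<open>norm w \<le> R\<close> by simp
  moreover have "level_poly P w \<noteq> 0"
    using level_poly_degree(2)[OF deg, of w] monic by auto
  moreover have "poly (level_poly P w) w = 0" and "poly (level_poly P w) a = 0"
    using sa by (simp_all add: Qs)
  ultimately show ?thesis
    using \<open>a \<noteq> w\<close> \<open>norm w \<le> R\<close> \<open>R < 1\<close> by (intro zeros_in_disk_ge_2[of _ w a]) auto
qed

lemma paper_p_times_x:
  assumes "\<alpha> * \<beta> ^ k = -1"
  shows "[:0, 1:] * paper_p \<alpha> \<beta> k = [:-\<alpha>, 1:] * [:\<beta>, 1:] ^ k - 1"
proof -
  define N where "N = [:-\<alpha>, 1:] * [:\<beta>, 1:] ^ k"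
  have "poly (N - 1) 0 = 0"
    using assms by (simp add: N_def)
  then have "[:0, 1:] dvd N - 1"
    using poly_eq_0_iff_dvd[of "N - 1" 0] by simp
  then show ?thesis
    unfolding paper_p_def N_def[symmetric] by (rule dvd_mult_div_cancel)
qed

lemma paper_p_monic:
  assumes "\<alpha> * \<beta> ^ k = -1"
  shows "degree (paper_p \<alpha> \<beta> k) = k" and "lead_coeff (paper_p \<alpha> \<beta> k) = 1"
proof -
  define N where "N = [:-\<alpha>, 1:] * [:\<beta>, 1:] ^ k"
  have xP: "pCons 0 (paper_p \<alpha> \<beta> k) = N - 1"
    using paper_p_times_x[OF assms] by (simp add: N_def)
  have "degree N = degree [:-\<alpha>, 1:] + degree ([:\<beta>, 1:] ^ k)"
    unfolding N_def by (rule degree_mult_eq) simp_all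
  then have dN: "degree N = k + 1"
    by (simp add: degree_linear_power)
  have "lead_coeff N = 1"
    unfolding N_def lead_coeff_mult lead_coeff_power by simp
  moreover have "degree (N + - 1) = degree N"
    by (rule degree_add_eq_left) (simp add: dN)
  then have dN1: "degree (N - 1) = k + 1"
    by (simp only: diff_conv_add_uminus dN)
  ultimately have "lead_coeff (N - 1) = 1"
    by (simp add: dN)
  with dN1 have "degree (pCons 0 (paper_p \<alpha> \<beta> k)) = k + 1"
    and "lead_coeff (pCons 0 (paper_p \<alpha> \<beta> k)) = 1"
    by (simp_all only: xP)
  then show "degree (paper_p \<alpha> \<beta> k) = k" and "lead_coeff (paper_p \<alpha> \<beta> k) = 1"
    by (simp_all split: if_splits)
qed

lemma paper_p_critical_identity:
  assumes "\<alpha> * \<beta> ^ k = -1" and "k > 0"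
  shows "w^2 * poly (pderiv (paper_p \<alpha> \<beta> k)) w - 1
    = (w + \<beta>) ^ (k - 1) * (of_nat k * w^2 - of_nat (k - 1) * \<alpha> * w + \<alpha> * \<beta>)"
proof -
  define P where "P = paper_p \<alpha> \<beta> k"
  define N where "N = [:-\<alpha>, 1:] * [:\<beta>, 1:] ^ k"
  obtain m where k: "k = Suc m"
    using assms(2) by (cases k) auto
  have xP: "[:0, 1:] * P = N - 1"
    unfolding P_def N_def by (rule paper_p_times_x[OF assms(1)])
  have "pderiv N = [:-\<alpha>, 1:] * pderiv ([:\<beta>, 1:] ^ k) + [:\<beta>, 1:] ^ k * pderiv [:-\<alpha>, 1:]"
    unfolding N_def by (rule pderiv_mult)
  then have N': "poly (pderiv N) w = (w - \<alpha>) * (of_nat k * (w + \<beta>) ^ m) + (w + \<beta>) ^ k"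
    unfolding k pderiv_power_Suc by (simp add: pderiv_pCons algebra_simps)
  have N: "poly N w = (w - \<alpha>) * (w + \<beta>) ^ k"
    by (simp add: N_def algebra_simps)
  have "w * poly P w = poly N w - 1"
    using arg_cong[OF xP, of "\<lambda>q. poly q w"] by simp
  moreover have "poly P w + w * poly (pderiv P) w = poly (pderiv N) w"
    using arg_cong[OF xP, of "\<lambda>q. poly (pderiv q) w"] by (simp add: pderiv_mult pderiv_pCons pderiv_diff)
  moreover have "w^2 * poly (pderiv P) w = w * (poly P w + w * poly (pderiv P) w) - w * poly P w"
    by (simp add: algebra_simps power2_eq_square)
  ultimately have "w^2 * poly (pderiv P) w - 1 = w * poly (pderiv N) w - poly N w"
    by simp
  also have "\<dots> = (w + \<beta>) ^ m * (of_nat k * w^2 - of_nat m * \<alpha> * w + \<alpha> * \<beta>)"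
    unfolding N N' k by (simp add: algebra_simps power2_eq_square)
  finally show ?thesis
    by (simp add: P_def k)
qed

lemma critical_quadratic_coeffs_bound:
  fixes \<alpha> \<beta> :: complex
  assumes "norm \<beta> > 1" and "\<alpha> * \<beta> ^ Suc m = -1" and "m > 0"
  shows "real m * norm \<alpha> + norm (\<alpha> * \<beta>) < real m + 1"
proof -
  have below_1: "x < 1" if "x * y = 1" and "y > 1" for x y :: real
  proof -
    have "x = 1 / y"
      using that by (simp add: eq_divide_eq)
    with \<open>y > 1\<close> show ?thesis
      by simp
  qed
  have "norm \<alpha> * norm \<beta> ^ Suc m = 1"
    using arg_cong[OF assms(2), of norm] by (simp add: norm_mult norm_power)
  moreover have "norm \<beta> ^ Suc m > 1" and "norm \<beta> ^ m > 1"
    using one_less_power[OF assms(1)] \<open>m > 0\<close> by blast+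
  ultimately have "norm \<alpha> < 1" and "norm \<alpha> * norm \<beta> < 1"
    by (auto intro: below_1 simp: mult.assoc)
  then show ?thesis
    using \<open>m > 0\<close> by (intro add_strict_mono) (simp_all add: norm_mult)
qed

lemma paper_p_near_critical_in_annulus:
  assumes "k \<ge> 2" and "norm \<beta> > 1" and \<alpha>\<beta>: "\<alpha> * \<beta> ^ k = -1"
  obtains r R \<eta> where "0 < r" and "R < 1" and "0 < \<eta>"
    and "\<And>w. norm w < 1 \<Longrightarrow> norm (w^2 * poly (pderiv (paper_p \<alpha> \<beta> k)) w - 1) < \<eta>
           \<Longrightarrow> r < norm w \<and> norm w < R"
proof -
  obtain m where k: "k = Suc m" and "m > 0"
    using assms(1) by (cases k) auto
  define g where "g w = of_nat k * w^2 + - (of_nat m * \<alpha>) * w + \<alpha> * \<beta>" for w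
  define d where "d = norm \<beta> - 1"
  have d: "d > 0"
    using assms(2) by (simp add: d_def)
  have "norm (- (of_nat m * \<alpha>)) + norm (\<alpha> * \<beta>) < norm (of_nat k :: complex)"
    using critical_quadratic_coeffs_bound[OF assms(2) \<alpha>\<beta>[unfolded k] \<open>m > 0\<close>]
      norm_of_nat[of k, where 'a=complex] by (simp add: k norm_mult)
  moreover have "\<alpha> * \<beta> \<noteq> 0"
    using \<alpha>\<beta> k by auto
  ultimately obtain r R \<eta> where "0 < r" "R < 1" "0 < \<eta>"
    and annulus: "\<And>w. norm w < 1 \<Longrightarrow> norm (g w) < \<eta> \<Longrightarrow> r < norm w \<and> norm w < R"
    unfolding g_def by (rule quadratic_small_imp_annulus) blast
  show thesis
  proof (rule that)
    fix w
    assume w: "norm w < 1"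
      and small: "norm (w^2 * poly (pderiv (paper_p \<alpha> \<beta> k)) w - 1) < \<eta> * d ^ m"
    have "d \<le> norm (w + \<beta>)"
      using w norm_triangle_ineq2[of \<beta> "- w"] by (simp add: d_def add.commute)
    then have "d ^ m * norm (g w) \<le> norm ((w + \<beta>) ^ m * g w)"
      using d by (simp add: norm_mult norm_power mult_right_mono power_mono)
    also have "\<dots> = norm (w^2 * poly (pderiv (paper_p \<alpha> \<beta> k)) w - 1)"
      using paper_p_critical_identity[OF \<alpha>\<beta>, of w] by (simp add: g_def k)
    finally have "d ^ m * norm (g w) < d ^ m * \<eta>"
      using small by (simp add: mult.commute)
    then have "norm (g w) < \<eta>"
      using d by simp
    with w show "r < norm w \<and> norm w < R"
      by (rule annulus)
  qed (use \<open>0 < r\<close> \<open>R < 1\<close> \<open>0 < \<eta>\<close> d in auto)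
qed

lemma paper_p_level_poly_two_zeros:
  assumes "k \<ge> 2" and "norm \<beta> > 1" and \<alpha>\<beta>: "\<alpha> * \<beta> ^ k = -1"
  obtains \<epsilon> where "0 < \<epsilon>"
    and "\<And>w. norm w < 1 \<Longrightarrow> w^2 * poly (pderiv (paper_p \<alpha> \<beta> k)) w \<noteq> 1
           \<Longrightarrow> norm (w^2 * poly (pderiv (paper_p \<alpha> \<beta> k)) w - 1) < \<epsilon>
           \<Longrightarrow> zeros_in_disk (level_poly (paper_p \<alpha> \<beta> k) w) \<ge> 2"
proof -
  define P where "P = paper_p \<alpha> \<beta> k"
  have deg: "degree P = k" and monic: "lead_coeff P = 1"
    unfolding P_def using \<alpha>\<beta> by (rule paper_p_monic)+
  obtain r R \<eta> where "0 < r" and "R < 1" and "0 < \<eta>"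
    and annulus: "\<And>w. norm w < 1 \<Longrightarrow> norm (w^2 * poly (pderiv P) w - 1) < \<eta> \<Longrightarrow> r < norm w \<and> norm w < R"
    unfolding P_def using assms by (rule paper_p_near_critical_in_annulus) blast
  show thesis
  proof (rule that[of "min \<eta> (r * (1 - R) ^ k)", folded P_def])
    show "0 < min \<eta> (r * (1 - R) ^ k)"
      using \<open>0 < r\<close> \<open>R < 1\<close> \<open>0 < \<eta>\<close> by simp
    fix w
    assume "norm w < 1" and crit: "w^2 * poly (pderiv P) w \<noteq> 1"
      and small: "norm (w^2 * poly (pderiv P) w - 1) < min \<eta> (r * (1 - R) ^ k)"
    have "norm (w^2 * poly (pderiv P) w - 1) < \<eta>"
      using small by simp
    with \<open>norm w < 1\<close> have "r < norm w" and "norm w < R"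
      using annulus by blast+
    then have "r * (1 - R) ^ k \<le> norm w * (1 - R) ^ k"
      using \<open>R < 1\<close> by (intro mult_right_mono) simp_all
    with small have "norm (w^2 * poly (pderiv P) w - 1) < norm w * (1 - R) ^ degree P"
      by (simp add: deg)
    with monic deg assms(1) crit \<open>0 < r\<close> \<open>r < norm w\<close> \<open>norm w < R\<close> \<open>R < 1\<close>
    show "zeros_in_disk (level_poly P w) \<ge> 2"
      by (intro zeros_in_disk_level_poly_ge_2[where R = R]) auto
  qed
qed

lemma norm_one_minus_cis_lt_1:
  assumes "0 < r" and "r < 2 * cos \<theta>"
  shows "norm (1 - complex_of_real r * cis \<theta>) < 1"
proof -
  have "norm (1 - complex_of_real r * cis \<theta>) ^ 2 = (1 - r * cos \<theta>)^2 + (r * sin \<theta>)^2"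
    by (simp add: cmod_power2 cis.ctr)
  also have "\<dots> = 1 - 2 * r * cos \<theta> + r^2"
    by (simp add: power_mult_distrib sin_squared_eq power2_diff algebra_simps)
  also have "\<dots> < 1 ^ 2"
    using mult_strict_left_mono[OF assms(2) assms(1)] by (simp add: power2_eq_square)
  finally show ?thesis
    by (rule power_less_imp_less_base) simp
qed

lemma norm_one_minus_root_half_exp:
  assumes "k \<ge> 3"
  defines "z \<equiv> 1 - complex_of_real (root k (1/2)) * exp (of_real pi * \<i> / of_nat k)"
  shows "z \<noteq> 0" and "norm z < 1"
proof -
  define r where "r = root k (1/2)"
  have z: "z = 1 - complex_of_real r * cis (pi / k)"
    by (simp add: z_def r_def cis_conv_exp mult.commute)
  have r: "0 < r" "r < 1"
    using assms(1) by (auto simp: r_def real_root_lt_1_iff)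
  have "cos (pi / 3) \<le> cos (pi / k)"
    using assms(1) by (intro cos_monotone_0_pi_le) (auto simp: field_simps)
  then have "r < 2 * cos (pi / k)"
    using r by (simp add: cos_60)
  then show "norm z < 1"
    unfolding z using r(1) by (intro norm_one_minus_cis_lt_1)
  show "z \<noteq> 0"
  proof
    assume "z = 0"
    then have "norm (complex_of_real r * cis (pi / k)) = 1"
      by (simp add: z)
    with r show False
      by (simp add: norm_mult)
  qed
qed

lemma norm_gt_1_if_power_eq_inverse:
  fixes \<beta> z :: complex
  assumes "\<beta> ^ n = inverse z" and "z \<noteq> 0" and "norm z < 1"
  shows "norm \<beta> > 1"
proof -
  have "norm \<beta> ^ n = inverse (norm z)"
    using assms(1) by (metis norm_inverse norm_power)
  also have "\<dots> > 1"
    using assms(2,3) by (simp add: one_less_inverse)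
  finally have "1 ^ n < norm \<beta> ^ n"
    by simp
  then show ?thesis
    by (rule power_less_imp_less_base) simp
qed

theorem lemma4p4:
  fixes k :: nat and \<beta> :: complex
  assumes "k \<ge> 3"
    and "\<beta> ^ (k + 1) = inverse (1 - complex_of_real (root k (1/2)) * exp (of_real pi * \<i> / of_nat k))"
  shows "\<exists>N::nat. \<forall>n::nat. n > N \<longrightarrow>
     (\<forall>w::complex. norm w < 1 \<and>
        w ^ 2 * poly (pderiv (paper_p (- inverse (\<beta> ^ k)) \<beta> k)) w = of_nat (n + 2) / of_nat (n + 1)
      \<longrightarrow> (let p = paper_p (- inverse (\<beta> ^ k)) \<beta> k;
               lam = 1 / w + poly p w
           in zeros_in_disk (1 + [:0, 1:] * (p - [:lam:])) \<ge> 2))"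
proof -
  define \<alpha> where "\<alpha> = - inverse (\<beta> ^ k)"
  have "norm \<beta> > 1"
    using assms(2) norm_one_minus_root_half_exp[OF assms(1)] by (rule norm_gt_1_if_power_eq_inverse)
  then have "\<beta> ^ k \<noteq> 0"
    by auto
  then have \<alpha>\<beta>: "\<alpha> * \<beta> ^ k = -1"
    by (simp add: \<alpha>_def)
  have "k \<ge> 2"
    using assms(1) by simp
  obtain \<epsilon> where "0 < \<epsilon>" and two_zeros: "\<And>w. norm w < 1
      \<Longrightarrow> w^2 * poly (pderiv (paper_p \<alpha> \<beta> k)) w \<noteq> 1
      \<Longrightarrow> norm (w^2 * poly (pderiv (paper_p \<alpha> \<beta> k)) w - 1) < \<epsilon>
      \<Longrightarrow> zeros_in_disk (level_poly (paper_p \<alpha> \<beta> k) w) \<ge> 2"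
    using \<open>k \<ge> 2\<close> \<open>norm \<beta> > 1\<close> \<alpha>\<beta> by (rule paper_p_level_poly_two_zeros) blast
  obtain N where N: "inverse (real (Suc N)) < \<epsilon>"
    using reals_Archimedean[OF \<open>0 < \<epsilon>\<close>] by blast
  have "zeros_in_disk (level_poly (paper_p \<alpha> \<beta> k) w) \<ge> 2"
    if "N < n" and "norm w < 1"
      and crit: "w^2 * poly (pderiv (paper_p \<alpha> \<beta> k)) w = of_nat (n + 2) / of_nat (n + 1)" for n w
  proof (rule two_zeros)
    define x where "x = inverse (real (Suc n))"
    have e: "w^2 * poly (pderiv (paper_p \<alpha> \<beta> k)) w - 1 = of_real x"
      using of_nat_neq_0[of n, where 'a=complex] unfolding crit x_def by (simp add: field_simps)
    have "x \<le> inverse (real (Suc N))"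
      using \<open>N < n\<close> by (simp add: x_def field_simps)
    with N have "x < \<epsilon>"
      by linarith
    moreover have "0 < x"
      by (simp add: x_def)
    ultimately show "w^2 * poly (pderiv (paper_p \<alpha> \<beta> k)) w \<noteq> 1"
      and "norm (w^2 * poly (pderiv (paper_p \<alpha> \<beta> k)) w - 1) < \<epsilon>"
      using e by auto
  qed fact
  then show ?thesis
    unfolding \<alpha>_def[symmetric] Let_def level_poly_def by blast
qed

end
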